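(* An element $\omega\in B_k$ is a zero divisor if and only if there exist $w_1,\dots,w_k$ with $w_i\in\{v_i,1-v_i\}$ for $1\le i\le k$ such that $\omega$ belongs to the ideal $\langle w_1,w_2,\dots,w_k\rangle$ of $B_k$.
   Context: Let $p$ be a prime, $r\ge 1$ an integer, and $\mathbb{F}_{p^r}$ the finite field with $p^r$ elements. For an integer $k\ge 1$, $B_k$ denotes the commutative ring $B_k=\mathbb{F}_{p^r}[v_1,\dots,v_k]/\langle v_i^2-v_i,\ v_iv_j-v_jv_i : 1\le i,j\le k\rangle$. An element $\omega$ is a zero divisor if $\omega b=0$ for some nonzero $b\in B_k$. *)

theory Defs
  imports Main
begin

text \<open>Concrete model of B_k = F[v_1,...,v_k]/(v_i^2 - v_i, v_i v_j - v_j v_i).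
  Since v_i^2 = v_i, every element has a unique normal form
  sum over S subset {1..k} of c_S * v_S, where v_S is the product of v_i for i in S.
  An element is represented by its coefficient function S to c_S, which vanishes
  outside the subsets of {1..k}. Multiplication: v_S * v_T = v_(S union T).\<close>

type_synonym 'a bk = "nat set \<Rightarrow> 'a"

definition Bk :: "nat \<Rightarrow> ('a::zero) bk set" where
  "Bk k = {f. \<forall>S. \<not> S \<subseteq> {1..k} \<longrightarrow> f S = 0}"

definition bk_zero :: "('a::zero) bk" where
  "bk_zero = (\<lambda>S. 0)"

definition bk_one :: "('a::{zero,one}) bk" where
  "bk_one = (\<lambda>S. if S = {} then 1 else 0)"

definition bk_var :: "nat \<Rightarrow> ('a::{zero,one}) bk" where
  "bk_var i = (\<lambda>S. if S = {i} then 1 else 0)"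

definition bk_add :: "('a::plus) bk \<Rightarrow> 'a bk \<Rightarrow> 'a bk" where
  "bk_add f g = (\<lambda>S. f S + g S)"

definition bk_sub :: "('a::minus) bk \<Rightarrow> 'a bk \<Rightarrow> 'a bk" where
  "bk_sub f g = (\<lambda>S. f S - g S)"

definition bk_mult :: "nat \<Rightarrow> ('a::comm_semiring_1) bk \<Rightarrow> 'a bk \<Rightarrow> 'a bk" where
  "bk_mult k f g = (\<lambda>U. \<Sum>S\<in>Pow {1..k}. \<Sum>T\<in>Pow {1..k}.
      if S \<union> T = U then f S * g T else 0)"

definition bk_zero_divisor :: "nat \<Rightarrow> ('a::comm_semiring_1) bk \<Rightarrow> bool" where
  "bk_zero_divisor k \<omega> \<longleftrightarrow> (\<exists>b\<in>Bk k. b \<noteq> bk_zero \<and> bk_mult k \<omega> b = bk_zero)"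

definition bk_ideal :: "nat \<Rightarrow> (nat \<Rightarrow> ('a::comm_semiring_1) bk) \<Rightarrow> 'a bk set" where
  "bk_ideal k W = {g. \<exists>a. (\<forall>i\<in>{1..k}. a i \<in> Bk k) \<and>
      g = (\<lambda>S. \<Sum>i\<in>{1..k}. bk_mult k (a i) (W i) S)}"

end

theory Submission
  imports Defs
begin

text \<open>Identify a point of \<open>{0,1}\<^sup>k\<close> with the set \<open>A \<subseteq> {1..k}\<close> of coordinates equal to 1.
  Evaluation at these \<open>2\<^sup>k\<close> points is an injective ring homomorphism on \<open>B\<^sub>k\<close> (Moebius inversion
  over the subset lattice), so \<open>B\<^sub>k\<close> is a product of copies of the field. Hence \<open>\<omega>\<close> is a zero
  divisor iff it vanishes at some point \<open>A\<close>; a witness is \<open>\<delta>\<^sub>A = \<Prod>\<^sub>i (1 - w\<^sub>i)\<close>, where \<open>w\<^sub>i = v\<^sub>i\<close>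
  for \<open>i \<notin> A\<close> and \<open>w\<^sub>i = 1 - v\<^sub>i\<close> for \<open>i \<in> A\<close>, which is 1 at \<open>A\<close> and 0 elsewhere. The ideal
  \<open>\<langle>w\<^sub>1, \<dots>, w\<^sub>k\<rangle>\<close> is the kernel of evaluation at \<open>A\<close>: the \<open>w\<^sub>i\<close> vanish there, and conversely,
  if \<open>\<omega>\<close> vanishes at \<open>A\<close> then \<open>\<omega> = \<omega> (1 - \<delta>\<^sub>A) = \<Sum>\<^sub>i \<omega> w\<^sub>i \<Prod>\<^sub>l\<^sub><\<^sub>i (1 - w\<^sub>l)\<close> by telescoping.\<close>

text \<open>The monomial \<open>v\<^sub>S\<close> takes the value 1 at the point \<open>A\<close> iff \<open>S \<subseteq> A\<close>.\<close>
definition bk_eval :: "nat set \<Rightarrow> ('a::comm_monoid_add) bk \<Rightarrow> 'a" where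
  "bk_eval A f = (\<Sum>S\<in>Pow A. f S)"

definition bk_point_gen :: "nat set \<Rightarrow> nat \<Rightarrow> ('a::{zero,one,minus}) bk" where
  "bk_point_gen A i = (if i \<in> A then bk_sub bk_one (bk_var i) else bk_var i)"

fun bk_prod_one_minus :: "nat \<Rightarrow> (nat \<Rightarrow> ('a::comm_ring_1) bk) \<Rightarrow> nat \<Rightarrow> 'a bk" where
  "bk_prod_one_minus k W 0 = bk_one"
| "bk_prod_one_minus k W (Suc j) =
    bk_mult k (bk_prod_one_minus k W j) (bk_sub bk_one (W (Suc j)))"

lemma bk_zero_in_Bk: "bk_zero \<in> Bk k"
  unfolding Bk_def bk_zero_def by simp

lemma bk_one_in_Bk: "bk_one \<in> Bk k"
  unfolding Bk_def bk_one_def by auto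

lemma bk_mult_in_Bk: "bk_mult k f g \<in> Bk k"
  unfolding Bk_def bk_mult_def
proof (intro CollectI allI impI)
  fix U :: "nat set"
  assume "\<not> U \<subseteq> {1..k}"
  then have "S \<union> T \<noteq> U" if "S \<in> Pow {1..k}" "T \<in> Pow {1..k}" for S T
    using that by auto
  then show "(\<Sum>S\<in>Pow {1..k}. \<Sum>T\<in>Pow {1..k}. if S \<union> T = U then f S * g T else 0) = 0"
    by (intro sum.neutral ballI) simp
qed

lemma bk_prod_one_minus_in_Bk: "bk_prod_one_minus k W j \<in> Bk k"
  by (cases j) (simp_all add: bk_one_in_Bk bk_mult_in_Bk)

lemma bk_ideal_subset_Bk: "bk_ideal k W \<subseteq> Bk k"
proof
  fix g
  assume "g \<in> bk_ideal k W"
  then obtain a where g: "g = (\<lambda>S. \<Sum>i\<in>{1..k}. bk_mult k (a i) (W i) S)"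
    unfolding bk_ideal_def by blast
  have zero: "bk_mult k f h S = 0" if "\<not> S \<subseteq> {1..k}" for f h S
    using bk_mult_in_Bk[of k f h] that unfolding Bk_def by blast
  have "g S = 0" if "\<not> S \<subseteq> {1..k}" for S
    unfolding g by (intro sum.neutral ballI zero that)
  then show "g \<in> Bk k"
    unfolding Bk_def by blast
qed

lemma bk_eval_zero: "bk_eval A bk_zero = 0"
  unfolding bk_eval_def bk_zero_def by simp

lemma bk_eval_one: "finite A \<Longrightarrow> bk_eval A bk_one = (1::'a::comm_semiring_1)"
  unfolding bk_eval_def bk_one_def by simp

lemma bk_eval_var:
  "finite A \<Longrightarrow> bk_eval A (bk_var i) = (if i \<in> A then 1 else (0::'a::comm_semiring_1))"
  unfolding bk_eval_def bk_var_def by simp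

lemma bk_eval_sub: "bk_eval A (bk_sub f g) = bk_eval A f - bk_eval A (g::'a::ab_group_add bk)"
  unfolding bk_eval_def bk_sub_def by (simp add: sum_subtractf)

lemma bk_eval_sum: "bk_eval A (\<lambda>S. \<Sum>i\<in>I. f i S) = (\<Sum>i\<in>I. bk_eval A (f i))"
  unfolding bk_eval_def by (rule sum.swap)

lemma bk_eval_mult:
  fixes f g :: "('a::comm_semiring_1) bk"
  assumes "A \<subseteq> {1..k}"
  shows "bk_eval A (bk_mult k f g) = bk_eval A f * bk_eval A g"
proof -
  have fin: "finite (Pow A)"
    using assms finite_subset by blast
  have restrict: "(\<Sum>S\<in>Pow {1..k}. if S \<subseteq> A then h S else 0) = bk_eval A h" for h :: "'a bk"
  proof -
    have "Pow {1..k} \<inter> {S. S \<subseteq> A} = Pow A"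
      using assms by auto
    then show ?thesis
      unfolding bk_eval_def using sum.inter_restrict[of "Pow {1..k}" h "{S. S \<subseteq> A}"] by simp
  qed
  have "bk_eval A (bk_mult k f g) = (\<Sum>S\<in>Pow {1..k}. \<Sum>T\<in>Pow {1..k}. \<Sum>U\<in>Pow A.
      if S \<union> T = U then f S * g T else 0)"
    unfolding bk_eval_def bk_mult_def
    by (subst sum.swap, rule sum.cong, rule refl, rule sum.swap)
  also have "\<dots> = (\<Sum>S\<in>Pow {1..k}. \<Sum>T\<in>Pow {1..k}.
      (if S \<subseteq> A then f S else 0) * (if T \<subseteq> A then g T else 0))"
    using fin by (intro sum.cong refl) simp
  also have "\<dots> = bk_eval A f * bk_eval A g"
    by (simp only: sum_product[symmetric] restrict)
  finally show ?thesis .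
qed

lemma bk_eval_prod_one_minus:
  fixes W :: "nat \<Rightarrow> ('a::comm_ring_1) bk"
  assumes "A \<subseteq> {1..k}"
  shows "bk_eval A (bk_prod_one_minus k W j) = (\<Prod>l\<in>{1..j}. 1 - bk_eval A (W l))"
  using assms finite_subset[OF assms]
  by (induction j) (simp_all add: bk_eval_mult bk_eval_sub bk_eval_one)

lemma bk_eval_point_gen:
  "finite B \<Longrightarrow>
    bk_eval B (bk_point_gen A i) = (if i \<in> A \<longleftrightarrow> i \<in> B then 0 else (1::'a::comm_ring_1))"
  unfolding bk_point_gen_def by (simp add: bk_eval_sub bk_eval_one bk_eval_var)

lemma bk_eval_prod_point_gen:
  assumes "A \<subseteq> {1..k}" and "B \<subseteq> {1..k}"
  shows "bk_eval B (bk_prod_one_minus k (bk_point_gen A) k) =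
    (if B = A then 1 else (0::'a::comm_ring_1))"
proof -
  have fin: "finite B"
    using assms(2) finite_subset by blast
  show ?thesis
  proof (cases "B = A")
    case True
    then show ?thesis
      using assms(2) fin by (simp add: bk_eval_prod_one_minus bk_eval_point_gen)
  next
    case False
    then obtain l where l_AB: "l \<in> A \<longleftrightarrow> l \<notin> B"
      by (auto simp: set_eq_iff)
    then have l: "l \<in> {1..k}"
      using assms by auto
    have "1 - bk_eval B (bk_point_gen A l) = (0::'a)"
      using fin l_AB by (simp add: bk_eval_point_gen)
    then have "(\<Prod>l\<in>{1..k}. 1 - bk_eval B (bk_point_gen A l)) = (0::'a)"
      using l by (intro prod_zero) auto
    then show ?thesis
      using False assms(2) by (simp add: bk_eval_prod_one_minus)
  qed
qed

lemma Bk_eqI: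
  fixes f g :: "('a::cancel_comm_monoid_add) bk"
  assumes "f \<in> Bk k" and "g \<in> Bk k"
    and eval_eq: "\<And>A. A \<subseteq> {1..k} \<Longrightarrow> bk_eval A f = bk_eval A g"
  shows "f = g"
proof
  fix S
  show "f S = g S"
  proof (cases "S \<subseteq> {1..k}")
    case False
    then show ?thesis using assms(1,2) unfolding Bk_def by simp
  next
    case True
    then have "finite S" by (rule finite_subset) simp
    then show ?thesis
      using True
    proof (induction rule: finite_psubset_induct)
      case (psubset S)
      have "(\<Sum>T\<in>Pow S - {S}. f T) = (\<Sum>T\<in>Pow S - {S}. g T)"
        using psubset by (intro sum.cong) auto
      moreover have "bk_eval S h = h S + (\<Sum>T\<in>Pow S - {S}. h T)" for h :: "'a bk"
        unfolding bk_eval_def using psubset(1) by (simp add: sum.remove[of "Pow S" S])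
      ultimately show ?case
        using eval_eq[OF psubset(3)] by simp
    qed
  qed
qed

lemma sum_mult_prod_one_minus:
  fixes e :: "nat \<Rightarrow> 'a::comm_ring_1"
  shows "(\<Sum>i\<in>{1..n}. e i * (\<Prod>l\<in>{1..i-1}. 1 - e l)) = 1 - (\<Prod>l\<in>{1..n}. 1 - e l)"
proof (induction n)
  case (Suc n)
  have "(\<Prod>l\<in>{1..Suc n}. 1 - e l) = (\<Prod>l\<in>{1..n}. 1 - e l) * (1 - e (Suc n))"
    by simp
  with Suc show ?case
    by (simp add: algebra_simps)
qed simp

lemma bk_ideal_point_gen_iff:
  fixes \<omega> :: "('a::comm_ring_1) bk"
  assumes A: "A \<subseteq> {1..k}" and \<omega>: "\<omega> \<in> Bk k"
  shows "\<omega> \<in> bk_ideal k (bk_point_gen A) \<longleftrightarrow> bk_eval A \<omega> = 0"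
proof
  assume "\<omega> \<in> bk_ideal k (bk_point_gen A)"
  then obtain a where "\<omega> = (\<lambda>S. \<Sum>i\<in>{1..k}. bk_mult k (a i) (bk_point_gen A i) S)"
    unfolding bk_ideal_def by blast
  moreover have "bk_eval A (bk_point_gen A i) = (0::'a)" for i
    using finite_subset[OF A] by (simp add: bk_eval_point_gen)
  ultimately show "bk_eval A \<omega> = 0"
    by (simp add: bk_eval_sum bk_eval_mult[OF A])
next
  assume \<omega>_A: "bk_eval A \<omega> = 0"
  let ?w = "bk_point_gen A :: nat \<Rightarrow> 'a bk"
  define a where "a i = bk_mult k \<omega> (bk_prod_one_minus k ?w (i - 1))" for i
  define g where "g = (\<lambda>S. \<Sum>i\<in>{1..k}. bk_mult k (a i) (?w i) S)"
  have g: "g \<in> bk_ideal k ?w"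
    unfolding bk_ideal_def g_def
    by (rule CollectI, rule exI[of _ a]) (simp add: a_def bk_mult_in_Bk)
  have eval_g: "bk_eval B g = bk_eval B \<omega>" if B: "B \<subseteq> {1..k}" for B
  proof -
    let ?e = "\<lambda>l. bk_eval B (?w l)"
    have "bk_eval B g = bk_eval B \<omega> * (\<Sum>i\<in>{1..k}. ?e i * (\<Prod>l\<in>{1..i-1}. 1 - ?e l))"
      unfolding g_def a_def bk_eval_sum sum_distrib_left
      by (intro sum.cong refl) (simp add: bk_eval_mult[OF B] bk_eval_prod_one_minus[OF B] mult_ac)
    also have "\<dots> = bk_eval B \<omega> * (1 - bk_eval B (bk_prod_one_minus k ?w k))"
      by (simp only: sum_mult_prod_one_minus bk_eval_prod_one_minus[OF B])
    also have "\<dots> = bk_eval B \<omega>"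
      using \<omega>_A by (simp add: bk_eval_prod_point_gen[OF A B])
    finally show ?thesis .
  qed
  have "g \<in> Bk k"
    using g bk_ideal_subset_Bk by blast
  with \<omega> have "\<omega> = g"
    by (rule Bk_eqI) (simp add: eval_g)
  with g show "\<omega> \<in> bk_ideal k ?w" by simp
qed

lemma bk_zero_divisor_iff_eval:
  fixes \<omega> :: "('a::idom) bk"
  shows "bk_zero_divisor k \<omega> \<longleftrightarrow> (\<exists>A\<subseteq>{1..k}. bk_eval A \<omega> = 0)"
proof
  assume "bk_zero_divisor k \<omega>"
  then obtain b where b: "b \<in> Bk k" "b \<noteq> bk_zero" "bk_mult k \<omega> b = bk_zero"
    unfolding bk_zero_divisor_def by blast
  have "\<exists>A\<subseteq>{1..k}. bk_eval A b \<noteq> 0"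
  proof (rule ccontr)
    assume "\<not> (\<exists>A\<subseteq>{1..k}. bk_eval A b \<noteq> 0)"
    then have "b = bk_zero"
      by (intro Bk_eqI[OF b(1) bk_zero_in_Bk]) (simp add: bk_eval_zero)
    with b(2) show False
      by simp
  qed
  then obtain A where A: "A \<subseteq> {1..k}" "bk_eval A b \<noteq> 0"
    by blast
  have "bk_eval A \<omega> * bk_eval A b = 0"
    using bk_eval_mult[OF A(1), of \<omega> b] b(3) by (simp add: bk_eval_zero)
  with A show "\<exists>A\<subseteq>{1..k}. bk_eval A \<omega> = 0"
    by auto
next
  assume "\<exists>A\<subseteq>{1..k}. bk_eval A \<omega> = 0"
  then obtain A where A: "A \<subseteq> {1..k}" and \<omega>_A: "bk_eval A \<omega> = 0"
    by blast
  define \<delta> :: "'a bk" where "\<delta> = bk_prod_one_minus k (bk_point_gen A) k"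
  have \<delta>: "bk_eval B \<delta> = (if B = A then 1 else 0)" if "B \<subseteq> {1..k}" for B
    unfolding \<delta>_def using bk_eval_prod_point_gen[OF A that] .
  have "\<delta> \<in> Bk k"
    unfolding \<delta>_def by (rule bk_prod_one_minus_in_Bk)
  moreover have "\<delta> \<noteq> bk_zero"
    using \<delta>[OF A] by (auto simp: bk_eval_zero)
  moreover have "bk_mult k \<omega> \<delta> = bk_zero"
    by (rule Bk_eqI[OF bk_mult_in_Bk bk_zero_in_Bk])
      (simp add: bk_eval_mult \<delta> \<omega>_A bk_eval_zero)
  ultimately show "bk_zero_divisor k \<omega>"
    unfolding bk_zero_divisor_def by blast
qed

lemma bk_ideal_cong:
  assumes "\<And>i. i \<in> {1..k} \<Longrightarrow> W i = W' i"
  shows "bk_ideal k W = bk_ideal k W'"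
proof -
  have "(\<lambda>S. \<Sum>i\<in>{1..k}. bk_mult k (a i) (W i) S) =
      (\<lambda>S. \<Sum>i\<in>{1..k}. bk_mult k (a i) (W' i) S)" for a
    using assms by (intro ext sum.cong) auto
  then show ?thesis
    unfolding bk_ideal_def by simp
qed

lemma ex_bk_ideal_gens_iff_point_gen:
  "(\<exists>W. (\<forall>i\<in>{1..k}. W i = bk_var i \<or> W i = bk_sub bk_one (bk_var i)) \<and> \<omega> \<in> bk_ideal k W)
    \<longleftrightarrow> (\<exists>A\<subseteq>{1..k}. \<omega> \<in> bk_ideal k (bk_point_gen A))"
proof
  assume "\<exists>W. (\<forall>i\<in>{1..k}. W i = bk_var i \<or> W i = bk_sub bk_one (bk_var i)) \<and>
    \<omega> \<in> bk_ideal k W"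
  then obtain W where W: "\<forall>i\<in>{1..k}. W i = bk_var i \<or> W i = bk_sub bk_one (bk_var i)"
    and \<omega>: "\<omega> \<in> bk_ideal k W"
    by blast
  let ?A = "{i\<in>{1..k}. W i = bk_sub bk_one (bk_var i)}"
  have "W i = bk_point_gen ?A i" if "i \<in> {1..k}" for i
    using W that unfolding bk_point_gen_def by auto
  then have "bk_ideal k W = bk_ideal k (bk_point_gen ?A)"
    by (rule bk_ideal_cong)
  with \<omega> show "\<exists>A\<subseteq>{1..k}. \<omega> \<in> bk_ideal k (bk_point_gen A)"
    by (intro exI[of _ ?A]) auto
next
  assume "\<exists>A\<subseteq>{1..k}. \<omega> \<in> bk_ideal k (bk_point_gen A)"
  then obtain A where "\<omega> \<in> bk_ideal k (bk_point_gen A)"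
    by blast
  then show "\<exists>W. (\<forall>i\<in>{1..k}. W i = bk_var i \<or> W i = bk_sub bk_one (bk_var i)) \<and>
      \<omega> \<in> bk_ideal k W"
    by (intro exI[of _ "bk_point_gen A"]) (simp add: bk_point_gen_def)
qed

theorem lemma2p3:
  fixes k :: nat and \<omega> :: "('a::{finite,field}) bk"
  assumes "k \<ge> 1" and "\<omega> \<in> Bk k"
  shows "bk_zero_divisor k \<omega> \<longleftrightarrow>
    (\<exists>W. (\<forall>i\<in>{1..k}. W i = bk_var i \<or> W i = bk_sub bk_one (bk_var i)) \<and>
         \<omega> \<in> bk_ideal k W)"
proof -
  have "bk_zero_divisor k \<omega> \<longleftrightarrow> (\<exists>A\<subseteq>{1..k}. bk_eval A \<omega> = 0)"
    by (rule bk_zero_divisor_iff_eval)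
  also have "\<dots> \<longleftrightarrow> (\<exists>A\<subseteq>{1..k}. \<omega> \<in> bk_ideal k (bk_point_gen A))"
    using bk_ideal_point_gen_iff[OF _ assms(2)] by blast
  also have "\<dots> \<longleftrightarrow> (\<exists>W. (\<forall>i\<in>{1..k}. W i = bk_var i \<or> W i = bk_sub bk_one (bk_var i)) \<and>
         \<omega> \<in> bk_ideal k W)"
    by (rule ex_bk_ideal_gens_iff_point_gen[symmetric])
  finally show ?thesis .
qed

end
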